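(* Let $r>1$ be real and let $d$ be a positive integer with $1\le d\le r-1$. Then $\sum_{n=d+1}^\infty n^{-r}<d^{-r}$. *)

theory Defs imports Complex_Main begin
end

theory Submission imports Defs begin

text \<open>Compare the series with the integral of \<open>x powr -r\<close> over \<open>[d, \<infinity>)\<close>, discretised as
  a telescoping sum: by the mean value theorem \<open>(a + 1) powr -r\<close> is smaller than
  \<open>(a powr (1 - r) - (a + 1) powr (1 - r)) / (r - 1)\<close>, and these differences add up to
  \<open>d powr (1 - r) / (r - 1) = d / (r - 1) * d powr -r\<close>, which is at most \<open>d powr -r\<close>
  because \<open>d \<le> r - 1\<close>.\<close>

lemma suminf_strict_mono:
  fixes f g :: "nat \<Rightarrow> real"
  assumes "summable f" "summable g" "\<And>n. f n < g n"
  shows "suminf f < suminf g"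
proof -
  have "0 < (\<Sum>n. g n - f n)"
    using assms by (intro suminf_pos summable_diff) auto
  also have "\<dots> = suminf g - suminf f"
    using assms by (intro suminf_diff [symmetric])
  finally show ?thesis by simp
qed

lemma powr_succ_less_powr_diff:
  fixes a s :: real
  assumes "a > 0" "s > 0"
  shows "(a + 1) powr (-s - 1) < (a powr (-s) - (a + 1) powr (-s)) / s"
proof -
  have "((\<lambda>z. z powr (-s)) has_real_derivative (-s) * x powr (-s - 1)) (at x)"
    if "a \<le> x" for x
    using that assms by (intro has_real_derivative_powr) auto
  then obtain z where z: "a < z" "z < a + 1"
    and mvt: "(a + 1) powr (-s) - a powr (-s) = ((a + 1) - a) * ((-s) * z powr (-s - 1))"
    using MVT2 [of a "a + 1" "\<lambda>z. z powr (-s)"] by force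
  have "(a + 1) powr (-s - 1) < z powr (-s - 1)"
    using z assms by (intro powr_less_mono2_neg) auto
  also have "\<dots> = (a powr (-s) - (a + 1) powr (-s)) / s"
    using mvt assms by (simp add: field_simps)
  finally show ?thesis .
qed

lemma sums_powr_diff:
  fixes c s :: real
  assumes "c > 0" "s > 0"
  shows "(\<lambda>k. (c + real k) powr (-s) - (c + real k + 1) powr (-s)) sums c powr (-s)"
proof -
  have "filterlim (\<lambda>k. c + real k) at_top sequentially"
    by (intro filterlim_tendsto_add_at_top [OF tendsto_const] filterlim_real_sequentially)
  then have "(\<lambda>k. (c + real k) powr (-s)) \<longlonglongrightarrow> 0"
    using assms by (intro tendsto_neg_powr) auto
  from telescope_sums' [OF this] show ?thesis
    by (simp add: add_ac)
qed

lemma suminf_powr_shift_less: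
  fixes c r :: real
  assumes "c > 0" "r > 1"
  shows "(\<Sum>k. (c + real k + 1) powr (-r)) < c powr (1 - r) / (r - 1)"
proof -
  define g where "g k = ((c + real k) powr (1 - r) - (c + real k + 1) powr (1 - r)) / (r - 1)"
    for k
  have g_sums: "g sums (c powr (1 - r) / (r - 1))"
    unfolding g_def using sums_powr_diff [of c "r - 1"] assms by (intro sums_divide) auto
  have less_g: "(c + real k + 1) powr (-r) < g k" for k
    using powr_succ_less_powr_diff [of "c + real k" "r - 1"] assms by (simp add: g_def)
  have "summable (\<lambda>k. (c + real k + 1) powr (-r))"
    using less_g
    by (intro summable_comparison_test' [OF sums_summable [OF g_sums]]) (simp add: less_imp_le)
  with less_g sums_summable [OF g_sums]
  have "(\<Sum>k. (c + real k + 1) powr (-r)) < suminf g"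
    by (intro suminf_strict_mono) auto
  with sums_unique [OF g_sums] show ?thesis by simp
qed

theorem mainTheorem12:
  fixes r :: real and d :: nat
  assumes "r > 1" and "1 \<le> d" and "real d \<le> r - 1"
  shows "(\<Sum>k. real (k + d + 1) powr (-r)) < real d powr (-r)"
proof -
  have "(\<Sum>k. real (k + d + 1) powr (-r)) < real d powr (1 - r) / (r - 1)"
    using suminf_powr_shift_less [of "real d" r] assms by (simp add: add_ac)
  also have "\<dots> = real d / (r - 1) * real d powr (-r)"
    using assms by (simp add: powr_add [of _ 1 "-r", simplified])
  also have "\<dots> \<le> real d powr (-r)"
    using assms by (intro mult_left_le_one_le) auto
  finally show ?thesis .
qed

end
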